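(* Let $s$ be a sequence of positive integers. The set of peakless $s$-words $\mathrm{Av}_s(132,231,121)$ is contained in every zig-zag language $L\subseteq S_s$.
   Context: For a sequence $s=(s_1,\dots,s_m)$ of positive integers, an $s$-word is a word with exactly $s_i$ copies of $i$ for each $i\in[m]$; $S_s$ is the set of $s$-words. A word $w$ contains a pattern $\alpha=\alpha_1\cdots\alpha_\ell$ (over $[k]$, using all values of $[k]$) if there are indices $i_1<\dots<i_\ell$ with $w_{i_a}<w_{i_b}$ iff $\alpha_a<\alpha_b$ and $w_{i_a}=w_{i_b}$ iff $\alpha_a=\alpha_b$; $\mathrm{Av}_s(132,231,121)$ is the set of $s$-words containing none of $132$, $231$, $121$. Parent operation: $p(s)=(s_1,\dots,s_{m-1},s_m-1)$ if $s_m>1$ and $p(s)=(s_1,\dots,s_{m-1})$ if $s_m=1$; for an $s$-word $w$, $p(w)$ deletes the rightmost copy of $m$; $p(L)=\{p(w):w\in L\}$. Zig-zag language (recursive on $n=\sum s_i$): for the empty sequence the only zig-zag language is $\{\varepsilon\}$. For $n\ge1$, $L\subseteq S_s$ is zig-zag if $p(L)$ is a zig-zag language of $p(s)$-words and for every $w'\in p(L)$ both of the following lie in $L$: (a) $w'm$, and (b) $mw'$ if $s_m=1$, or, if $s_m>1$, the word obtained by inserting $m$ immediately next to the rightmost $m$ of $w'$. *)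

theory Defs
  imports Main
begin

(* A sequence s = (s_1,...,s_m) is a list of naturals; s ! (i-1) = s_i.
   Words are lists of naturals over the alphabet {1..m}. *)

definition is_sword :: "nat list \<Rightarrow> nat list \<Rightarrow> bool" where
  "is_sword s w \<longleftrightarrow> set w \<subseteq> {1..length s} \<and>
     (\<forall>i\<in>{1..length s}. count_list w i = s ! (i - 1))"

definition S_words :: "nat list \<Rightarrow> nat list set" where
  "S_words s = {w. is_sword s w}"

definition contains_pat :: "nat list \<Rightarrow> nat list \<Rightarrow> bool" where
  "contains_pat w alpha \<longleftrightarrow>
     (\<exists>f. strict_mono_on {..<length alpha} f \<and>
          (\<forall>a<length alpha. f a < length w) \<and>
          (\<forall>a<length alpha. \<forall>b<length alpha.
              (w ! f a < w ! f b \<longleftrightarrow> alpha ! a < alpha ! b) \<and>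
              (w ! f a = w ! f b \<longleftrightarrow> alpha ! a = alpha ! b)))"

definition peakless :: "nat list \<Rightarrow> nat list set" where
  "peakless s = {w \<in> S_words s. \<not> contains_pat w [1,3,2] \<and>
                   \<not> contains_pat w [2,3,1] \<and> \<not> contains_pat w [1,2,1]}"

definition parent_seq :: "nat list \<Rightarrow> nat list" where
  "parent_seq s = (if last s > 1 then butlast s @ [last s - 1] else butlast s)"

definition rightmost :: "nat \<Rightarrow> nat list \<Rightarrow> nat" where
  "rightmost x w = Max {i. i < length w \<and> w ! i = x}"

definition parent_word :: "nat \<Rightarrow> nat list \<Rightarrow> nat list" where
  "parent_word m w = take (rightmost m w) w @ drop (Suc (rightmost m w)) w"

definition insert_next :: "nat \<Rightarrow> nat list \<Rightarrow> nat list" where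
  "insert_next m w = take (Suc (rightmost m w)) w @ [m] @ drop (Suc (rightmost m w)) w"

function zigzag :: "nat list \<Rightarrow> nat list set \<Rightarrow> bool" where
  "zigzag s L =
    (if s = [] then L = {[]}
     else if last s = 0 then False
     else (let m = length s; ps = parent_seq s; PL = parent_word m ` L in
       L \<subseteq> S_words s \<and> zigzag ps PL \<and>
       (\<forall>w'\<in>PL. w' @ [m] \<in> L \<and>
          (if last s = 1 then m # w' \<in> L else insert_next m w' \<in> L))))"
  by auto
termination
  apply (relation "measure (\<lambda>(s, L). sum_list s)")
   apply simp
  apply (clarsimp simp: parent_seq_def)
  apply (case_tac s rule: rev_cases)
   apply auto
  done

end

theory Submission
  imports Defs "HOL-Library.Sublist"
begin

(* A word avoiding 132, 231 and 121 contains no peak, i.e. no subsequence a b c with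
   a < b > c, and peak-freeness passes to subsequences, in particular to the parent word.
   So, inductively along the zig-zag recursion, the parent of a peak-free s-word w lies in
   p(L). Write w = xs m ys with m the largest letter and ys free of m. If ys is nonempty its
   first letter is below m, so every letter of xs is m: either xs is empty, m occurs once
   and w = m p(w), or xs ends in m and w arises from p(w) by doubling its rightmost m.
   Otherwise w = p(w) m. In each case the zig-zag property puts w into L. *)

definition peak_free :: "'a::linorder list \<Rightarrow> bool" where
  "peak_free w \<longleftrightarrow> (\<nexists>a b c. subseq [a, b, c] w \<and> a < b \<and> c < b)"

lemma peak_free_subseq: "subseq v w \<Longrightarrow> peak_free w \<Longrightarrow> peak_free v"
  unfolding peak_free_def using subseq_order.trans by blast

lemma subseq_index_embedding:
  "subseq u w \<Longrightarrow> \<exists>f. strict_mono_on {..<length u} f \<and>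
     (\<forall>a<length u. f a < length w \<and> w ! f a = u ! a)"
proof (induction rule: list_emb.induct)
  case (list_emb_Nil ys)
  show ?case by (simp add: strict_mono_on_def)
next
  case (list_emb_Cons xs ys y)
  then obtain f where "strict_mono_on {..<length xs} f"
    "\<forall>a<length xs. f a < length ys \<and> ys ! f a = xs ! a" by blast
  then show ?case
    by (intro exI[of _ "Suc \<circ> f"]) (auto simp: strict_mono_on_def)
next
  case (list_emb_Cons2 x y xs ys)
  then obtain f where f: "strict_mono_on {..<length xs} f"
    "\<forall>a<length xs. f a < length ys \<and> ys ! f a = xs ! a" by blast
  define g where "g a = (case a of 0 \<Rightarrow> 0 | Suc b \<Rightarrow> Suc (f b))" for a
  have "strict_mono_on {..<length (x # xs)} g"
    using f(1) by (auto simp: strict_mono_on_def g_def split: nat.split)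
  moreover have "\<forall>a<length (x # xs). g a < length (y # ys) \<and> (y # ys) ! g a = (x # xs) ! a"
    using f(2) list_emb_Cons2.hyps(1) by (auto simp: g_def split: nat.split)
  ultimately show ?case by blast
qed

lemma contains_pat_if_subseq:
  assumes "subseq u w" "length u = length \<alpha>"
    and "\<forall>a<length \<alpha>. \<forall>b<length \<alpha>.
      (u ! a < u ! b \<longleftrightarrow> \<alpha> ! a < \<alpha> ! b) \<and> (u ! a = u ! b \<longleftrightarrow> \<alpha> ! a = \<alpha> ! b)"
  shows "contains_pat w \<alpha>"
  using subseq_index_embedding[OF assms(1)] assms(2,3) unfolding contains_pat_def by metis

lemma peakless_imp_peak_free:
  assumes "w \<in> peakless s"
  shows "peak_free w"
  unfolding peak_free_def
proof
  assume "\<exists>a b c. subseq [a, b, c] w \<and> a < b \<and> c < b"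
  then obtain a b c where abc: "subseq [a, b, c] w" "a < b" "c < b" by blast
  have all3: "(\<forall>i<length [x, y, z::nat]. P i) \<longleftrightarrow> P 0 \<and> P 1 \<and> P 2" for x y z P
    by (auto simp: less_Suc_eq numeral_2_eq_2)
  consider "a < c" | "c < a" | "a = c" by linarith
  then show False
  proof cases
    case 1
    then have "contains_pat w [1, 3, 2]"
      using abc by (intro contains_pat_if_subseq[of "[a, b, c]"]) (simp_all only: all3, auto)
    then show False using assms by (simp add: peakless_def)
  next
    case 2
    then have "contains_pat w [2, 3, 1]"
      using abc by (intro contains_pat_if_subseq[of "[a, b, c]"]) (simp_all only: all3, auto)
    then show False using assms by (simp add: peakless_def)
  next
    case 3
    then have "contains_pat w [1, 2, 1]"
      using abc by (intro contains_pat_if_subseq[of "[a, b, c]"]) (simp_all only: all3, auto)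
    then show False using assms by (simp add: peakless_def)
  qed
qed

lemma peak_free_append_Cons_cases:
  assumes "peak_free (xs @ m # ys)" "\<forall>x\<in>set (xs @ ys). x \<le> m" "m \<notin> set ys"
  shows "ys = [] \<or> xs = [] \<or> last xs = m"
proof (rule ccontr)
  assume "\<not> ?thesis"
  then obtain y ys' xs' a where ys: "ys = y # ys'" and xs: "xs = xs' @ [a]" and "a \<noteq> m"
    by (metis neq_Nil_conv rev_exhaust last_snoc)
  then have "a < m" "y < m" using assms(2,3) by auto
  moreover have "subseq [a, m, y] (xs @ m # ys)" using xs ys by (auto intro!: list_emb_append2)
  ultimately show False using assms(1) unfolding peak_free_def by blast
qed

lemma rightmost_append_Cons:
  assumes "m \<notin> set ys"
  shows "rightmost m (xs @ m # ys) = length xs"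
  unfolding rightmost_def
proof (rule Max_eqI)
  fix i assume "i \<in> {i. i < length (xs @ m # ys) \<and> (xs @ m # ys) ! i = m}"
  then show "i \<le> length xs"
    using assms by (auto simp: nth_append nth_Cons' split: if_splits)
qed auto

lemma insert_next_append_Cons:
  "m \<notin> set ys \<Longrightarrow> insert_next m (xs @ m # ys) = xs @ m # m # ys"
  by (simp add: insert_next_def rightmost_append_Cons)

lemma peak_free_rightmost_max_cases:
  assumes "peak_free (xs @ m # ys)" "\<forall>x\<in>set (xs @ ys). x \<le> m" "m \<notin> set ys"
  obtains "xs @ m # ys = (xs @ ys) @ [m]"
    | "count_list (xs @ m # ys) m = 1" "xs @ m # ys = m # xs @ ys"
    | "count_list (xs @ m # ys) m \<noteq> 1" "xs @ m # ys = insert_next m (xs @ ys)"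
proof -
  consider "ys = []" | "xs = []" | xs' where "xs = xs' @ [m]"
    using peak_free_append_Cons_cases[OF assms] by (metis append_butlast_last_id)
  then show thesis
  proof cases
    case 2
    then show thesis using that(2) assms(3) by (simp add: count_list_0_iff)
  next
    case 3
    then show thesis using that(3) assms(3) by (simp add: insert_next_append_Cons)
  qed (use that(1) in simp)
qed

lemma is_sword_snoc:
  "is_sword (s @ [c]) w \<longleftrightarrow> set w \<subseteq> {1..Suc (length s)} \<and>
     count_list w (Suc (length s)) = c \<and> (\<forall>i\<in>{1..length s}. count_list w i = s ! (i - 1))"
  unfolding is_sword_def by (auto simp: nth_append atLeastAtMostSuc_conv)

lemma is_sword_snoc_0: "is_sword (s @ [0]) w \<longleftrightarrow> is_sword s w"
  unfolding is_sword_snoc by (auto simp: is_sword_def count_list_0_iff le_Suc_eq)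

lemma is_sword_parent_seq:
  "0 < c \<Longrightarrow> is_sword (parent_seq (s @ [c])) w \<longleftrightarrow> is_sword (s @ [c - 1]) w"
  by (simp add: parent_seq_def is_sword_snoc_0)

lemma is_sword_snoc_split:
  assumes "is_sword (s @ [Suc c]) w"
  obtains xs ys where "w = xs @ Suc (length s) # ys" "Suc (length s) \<notin> set ys"
    and "is_sword (s @ [c]) (xs @ ys)"
proof -
  have "count_list w (Suc (length s)) = Suc c"
    using assms by (simp add: is_sword_snoc)
  then have "Suc (length s) \<in> set w"
    by (metis count_list_0_iff Zero_not_Suc)
  then obtain xs ys where w: "w = xs @ Suc (length s) # ys" "Suc (length s) \<notin> set ys"
    using split_list_last by metis
  moreover have "is_sword (s @ [c]) (xs @ ys)"
    using assms unfolding w is_sword_snoc by auto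
  ultimately show thesis using that by blast
qed

lemma zigzagD:
  assumes "zigzag s L" "s \<noteq> []"
  shows "last s \<noteq> 0" and "zigzag (parent_seq s) (parent_word (length s) ` L)"
    and "v \<in> parent_word (length s) ` L \<Longrightarrow> v @ [length s] \<in> L"
    and "v \<in> parent_word (length s) ` L \<Longrightarrow> last s = 1 \<Longrightarrow> length s # v \<in> L"
    and "v \<in> parent_word (length s) ` L \<Longrightarrow> last s \<noteq> 1 \<Longrightarrow> insert_next (length s) v \<in> L"
  using assms zigzag.simps[of s L] by (auto simp: Let_def simp del: zigzag.simps split: if_splits)

lemma zigzag_contains_peak_free:
  "zigzag s L \<Longrightarrow> is_sword s w \<Longrightarrow> peak_free w \<Longrightarrow> w \<in> L"
proof (induction s L arbitrary: w rule: zigzag.induct)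
  case (1 s L)
  show ?case
  proof (cases s rule: rev_cases)
    case Nil
    then show ?thesis using "1.prems"(1,2) by (simp add: is_sword_def)
  next
    case (snoc s' c)
    define m where "m = length s"
    have "s \<noteq> []" using snoc by simp
    note zz = zigzagD[OF "1.prems"(1) this, folded m_def]
    have "last s = c" "c \<noteq> 0" using zz(1) snoc by simp_all
    have count_m: "count_list w m = c" and letters: "set w \<subseteq> {1..m}"
      using "1.prems"(2) snoc by (simp_all add: is_sword_snoc m_def)
    from "1.prems"(2) \<open>c \<noteq> 0\<close> have "is_sword (s' @ [Suc (c - 1)]) w"
      by (simp add: snoc)
    then obtain xs ys where w: "w = xs @ m # ys" "m \<notin> set ys"
      and "is_sword (s' @ [c - 1]) (xs @ ys)"
      by (rule is_sword_snoc_split) (simp_all add: m_def snoc)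
    then have "is_sword (parent_seq s) (xs @ ys)"
      using \<open>c \<noteq> 0\<close> by (simp add: snoc is_sword_parent_seq)
    moreover have "subseq (xs @ ys) w"
      unfolding w by (auto simp: subseq_append')
    then have "peak_free (xs @ ys)"
      using "1.prems"(3) by (rule peak_free_subseq)
    ultimately have parent_in: "xs @ ys \<in> parent_word m ` L"
      by (rule "1.IH"[OF \<open>s \<noteq> []\<close> zz(1) m_def refl refl zz(2)])
    have "peak_free (xs @ m # ys)" "\<forall>x\<in>set (xs @ ys). x \<le> m"
      using "1.prems"(3) letters w by auto
    then show ?thesis
    proof (rule peak_free_rightmost_max_cases[OF _ _ \<open>m \<notin> set ys\<close>])
      assume "xs @ m # ys = (xs @ ys) @ [m]"
      then show ?thesis using zz(3)[OF parent_in] w by simp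
    next
      assume "count_list (xs @ m # ys) m = 1" "xs @ m # ys = m # xs @ ys"
      then show ?thesis using zz(4)[OF parent_in] w count_m \<open>last s = c\<close> by metis
    next
      assume "count_list (xs @ m # ys) m \<noteq> 1" "xs @ m # ys = insert_next m (xs @ ys)"
      then show ?thesis using zz(5)[OF parent_in] w count_m \<open>last s = c\<close> by simp
    qed
  qed
qed

theorem mainTheorem6:
  fixes s :: "nat list" and L :: "nat list set"
  assumes "\<forall>x\<in>set s. x > 0"
    and "L \<subseteq> S_words s"
    and "zigzag s L"
  shows "peakless s \<subseteq> L"
proof
  fix w assume "w \<in> peakless s"
  then have "is_sword s w" "peak_free w"
    by (auto simp: peakless_def S_words_def intro: peakless_imp_peak_free)
  then show "w \<in> L" using zigzag_contains_peak_free[OF assms(3)] by blast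
qed

end
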